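(* Assume the common support assumption, the overlap assumption and the unconfoundedness assumption. Then for all $x\in\mathcal X$, $\theta(x)=\Gamma(x,p)$, where $p=p_0$ under Design 1 and $p=0$ under Design 2.
   Context: Population variables: $Y^*\in\{0,1\}$ (outcome), $T^*\in\{0,1\}$ (treatment), $X^*$ (covariate vector). Potential outcomes $Y^*(1),Y^*(0)\in\{0,1\}$ satisfy $Y^*=T^*Y^*(1)+(1-T^* )Y^*(0)$. Let $p_0:=\Pr(Y^*=1)$. The observed vector $(Y,T,X)$ arises from Bernoulli sampling: $Y\in\{0,1\}$ is drawn with known probability $h_0:=\Pr(Y=1)\in(0,1)$, and given $Y=y$, $(T,X)$ is drawn from a distribution $\mathcal P_y$. Densities (or mass functions) are denoted by $f$. Design 1 (case-control): for all $t\in\{0,1\}$, $x\in\mathcal X$, $y\in\{0,1\}$, $f_{X|Y}(x\mid y)=f_{X^*|Y^*}(x\mid y)$ and $\Pr(T=t\mid X=x,Y=y)=\Pr(T^*=t\mid X^*=x,Y^*=y)$. Design 2 (case-population): for all $t,x$, $f_{X|Y}(x\mid 0)=f_{X^*}(x)$, $\Pr(T=t\mid X=x,Y=0)=\Pr(T^*=t\mid X^*=x)$, $f_{X|Y}(x\mid 1)=f_{X^*|Y^*}(x\mid 1)$, $\Pr(T=t\mid X=x,Y=1)=\Pr(T^*=t\mid X^*=x,Y^*=1)$. Common support assumption: the support of $X^*$ and that of $X$ given $Y=y$ for $y=0,1$ coincide; call it $\mathcal X$. Let $\Pi(t\mid y,x):=\Pr(T=t\mid Y=y,X=x)$, assumed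 nonzero for all $t,y\in\{0,1\}$. For $p\in[0,1]$, under Design 1, $r(x,p):=\frac{p(1-h_0)\Pr(Y=1\mid X=x)}{p(1-h_0)\Pr(Y=1\mid X=x)+h_0(1-p)\Pr(Y=0\mid X=x)}$, and under Design 2, $r(x,p):=\frac{p(1-h_0)}{h_0}\frac{\Pr(Y=1\mid X=x)}{\Pr(Y=0\mid X=x)}$. Define $\Gamma(x,p):=\frac{\Pi(1\mid 1,x)}{\Pi(0\mid 1,x)}\cdot\frac{\Pi(0\mid 0,x)+r(x,p)\{\Pi(0\mid 1,x)-\Pi(0\mid 0,x)\}}{\Pi(1\mid 0,x)+r(x,p)\{\Pi(1\mid 1,x)-\Pi(1\mid 0,x)\}}$. Causal relative risk: $\theta(x):=\Pr\{Y^*(1)=1\mid X^*=x\}/\Pr\{Y^*(0)=1\mid X^*=x\}$ (denominator assumed positive). Overlap: for all $(t,x)\in\{0,1\}\times\mathcal X$, $0<\Pr\{Y^*(t)=1\mid X^*=x\}<1$ and $0<\Pr(T^*=1\mid X^*=x)<1$. Unconfoundedness: for all $t\in\{0,1\}$, $x\in\mathcal X$, $\Pr\{Y^*(t)=1\mid T^*=1,X^*=x\}=\Pr\{Y^*(t)=1\mid T^*=0,X^*=x\}$. *)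

theory Defs
  imports "HOL-Probability.Probability"
begin

text \<open>Outcomes/treatments in {0,1} are encoded as bool (True = 1).
  Conditionally on X* = x, the triple (Y*(1), Y*(0), T*) has distribution Q x.
  The covariate X* has density fX w.r.t. a base measure M.\<close>

type_synonym pomega = "bool \<times> bool \<times> bool"  \<comment> \<open>(Y*(1), Y*(0), T*)\<close>

definition Ypot :: "bool \<Rightarrow> pomega \<Rightarrow> bool" where
  "Ypot t \<omega> = (if t then fst \<omega> else fst (snd \<omega>))"

definition Tstar :: "pomega \<Rightarrow> bool" where
  "Tstar \<omega> = snd (snd \<omega>)"

definition Ystar :: "pomega \<Rightarrow> bool" where
  "Ystar \<omega> = Ypot (Tstar \<omega>) \<omega>"

definition pr_pot :: "('x \<Rightarrow> pomega pmf) \<Rightarrow> bool \<Rightarrow> 'x \<Rightarrow> real" where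
  "pr_pot Q t x = measure_pmf.prob (Q x) {\<omega>. Ypot t \<omega>}"

definition pr_pot_given_T :: "('x \<Rightarrow> pomega pmf) \<Rightarrow> bool \<Rightarrow> bool \<Rightarrow> 'x \<Rightarrow> real" where
  "pr_pot_given_T Q t s x =
     measure_pmf.prob (Q x) {\<omega>. Ypot t \<omega> \<and> Tstar \<omega> = s} / measure_pmf.prob (Q x) {\<omega>. Tstar \<omega> = s}"

definition pr_T :: "('x \<Rightarrow> pomega pmf) \<Rightarrow> bool \<Rightarrow> 'x \<Rightarrow> real" where
  "pr_T Q t x = measure_pmf.prob (Q x) {\<omega>. Tstar \<omega> = t}"

definition pr_Y :: "('x \<Rightarrow> pomega pmf) \<Rightarrow> bool \<Rightarrow> 'x \<Rightarrow> real" where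
  "pr_Y Q y x = measure_pmf.prob (Q x) {\<omega>. Ystar \<omega> = y}"

definition pr_T_given_Y :: "('x \<Rightarrow> pomega pmf) \<Rightarrow> bool \<Rightarrow> bool \<Rightarrow> 'x \<Rightarrow> real" where
  "pr_T_given_Y Q t y x =
     measure_pmf.prob (Q x) {\<omega>. Tstar \<omega> = t \<and> Ystar \<omega> = y} / pr_Y Q y x"

definition p0 :: "'x measure \<Rightarrow> ('x \<Rightarrow> real) \<Rightarrow> ('x \<Rightarrow> pomega pmf) \<Rightarrow> real" where
  "p0 M fX Q = integral\<^sup>L M (\<lambda>x. fX x * pr_Y Q True x)"

definition f_X_given_Ystar ::
  "'x measure \<Rightarrow> ('x \<Rightarrow> real) \<Rightarrow> ('x \<Rightarrow> pomega pmf) \<Rightarrow> bool \<Rightarrow> 'x \<Rightarrow> real" where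
  "f_X_given_Ystar M fX Q y x =
     fX x * pr_Y Q y x / (if y then p0 M fX Q else 1 - p0 M fX Q)"

definition theta :: "('x \<Rightarrow> pomega pmf) \<Rightarrow> 'x \<Rightarrow> real" where
  "theta Q x = pr_pot Q True x / pr_pot Q False x"

text \<open>Observed (sampled) side: h0 = Pr(Y=1); fXY y = density of X given Y=y (w.r.t. M);
  PiT t y x = Pr(T=t | Y=y, X=x).\<close>

definition pr_Yobs_given_X :: "real \<Rightarrow> (bool \<Rightarrow> 'x \<Rightarrow> real) \<Rightarrow> bool \<Rightarrow> 'x \<Rightarrow> real" where
  "pr_Yobs_given_X h0 fXY y x =
     (if y then h0 * fXY True x else (1 - h0) * fXY False x)
     / (h0 * fXY True x + (1 - h0) * fXY False x)"

datatype design = Design1 | Design2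

definition rfun :: "design \<Rightarrow> real \<Rightarrow> (bool \<Rightarrow> 'x \<Rightarrow> real) \<Rightarrow> 'x \<Rightarrow> real \<Rightarrow> real" where
  "rfun d h0 fXY x p =
     (let a = pr_Yobs_given_X h0 fXY True x; b = pr_Yobs_given_X h0 fXY False x in
      (case d of
         Design1 \<Rightarrow> p * (1 - h0) * a / (p * (1 - h0) * a + h0 * (1 - p) * b)
       | Design2 \<Rightarrow> p * (1 - h0) / h0 * (a / b)))"

definition Gamma :: "design \<Rightarrow> real \<Rightarrow> (bool \<Rightarrow> 'x \<Rightarrow> real) \<Rightarrow> (bool \<Rightarrow> bool \<Rightarrow> 'x \<Rightarrow> real)
                      \<Rightarrow> 'x \<Rightarrow> real \<Rightarrow> real" where
  "Gamma d h0 fXY PiT x p =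
     (let r = rfun d h0 fXY x p in
      PiT True True x / PiT False True x *
      ((PiT False False x + r * (PiT False True x - PiT False False x))
       / (PiT True False x + r * (PiT True True x - PiT True False x))))"

definition design_holds ::
  "design \<Rightarrow> 'x measure \<Rightarrow> ('x \<Rightarrow> real) \<Rightarrow> ('x \<Rightarrow> pomega pmf)
     \<Rightarrow> (bool \<Rightarrow> 'x \<Rightarrow> real) \<Rightarrow> (bool \<Rightarrow> bool \<Rightarrow> 'x \<Rightarrow> real) \<Rightarrow> 'x set \<Rightarrow> bool" where
  "design_holds d M fX Q fXY PiT S =
     (case d of
        Design1 \<Rightarrow> (\<forall>x\<in>S. \<forall>y t.
                      fXY y x = f_X_given_Ystar M fX Q y x \<and> PiT t y x = pr_T_given_Y Q t y x)
      | Design2 \<Rightarrow> (\<forall>x\<in>S. \<forall>t.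
                      fXY False x = fX x \<and> PiT t False x = pr_T Q t x \<and>
                      fXY True x = f_X_given_Ystar M fX Q True x \<and> PiT t True x = pr_T_given_Y Q t True x))"

end

theory Submission
  imports Defs
begin

(* Under unconfoundedness theta(x) equals the observed risk ratio
   Pr(Y* = 1 | T* = 1, x) / Pr(Y* = 1 | T* = 0, x), which Bayes' rule turns into the odds
   Pi(1|1,x) / Pi(0|1,x) times Pr(T* = 0 | x) / Pr(T* = 1 | x).  The bracketed terms of Gamma
   recover Pr(T* = t | x) as the mixture Pi(t|0,x) + r (Pi(t|1,x) - Pi(t|0,x)) as soon as
   r = Pr(Y* = 1 | x).  Under case-control sampling r(x, p0) is exactly this posterior (Bayes'
   rule with prior p0); under case-population sampling the controls already follow the
   population law of T* given x, so Pi(t|0,x) = Pr(T* = t | x) and r = 0 suffices. *)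

lemma measure_pmf_prob_split:
  "measure_pmf.prob P A = measure_pmf.prob P {\<omega> \<in> A. B \<omega>} + measure_pmf.prob P {\<omega> \<in> A. \<not> B \<omega>}"
proof -
  have "A = {\<omega> \<in> A. B \<omega>} \<union> {\<omega> \<in> A. \<not> B \<omega>}" by blast
  then show ?thesis
    by (metis (no_types, lifting) measure_pmf.finite_measure_Union sets_measure_pmf UNIV_I
        disjoint_iff mem_Collect_eq)
qed

lemma measure_pmf_prob_bool_total:
  "measure_pmf.prob P {\<omega>. f \<omega> = True} + measure_pmf.prob P {\<omega>. f \<omega> = False} = 1"
  using measure_pmf_prob_split[of P UNIV f] by simp

lemma measure_pmf_cond_prob_mult:
  "measure_pmf.prob P {\<omega>. A \<omega> \<and> B \<omega>} / measure_pmf.prob P {\<omega>. B \<omega>} * measure_pmf.prob P {\<omega>. B \<omega>}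
     = measure_pmf.prob P {\<omega>. A \<omega> \<and> B \<omega>}"
proof (cases "measure_pmf.prob P {\<omega>. B \<omega>} = 0")
  case True
  then have "measure_pmf.prob P {\<omega>. A \<omega> \<and> B \<omega>} = 0"
    by (metis (no_types, lifting) measure_pmf.finite_measure_mono measure_nonneg order_antisym
        mem_Collect_eq subsetI sets_measure_pmf UNIV_I)
  then show ?thesis by simp
qed simp

definition pr_TY :: "('x \<Rightarrow> pomega pmf) \<Rightarrow> bool \<Rightarrow> bool \<Rightarrow> 'x \<Rightarrow> real" where
  "pr_TY Q t y x = measure_pmf.prob (Q x) {\<omega>. Tstar \<omega> = t \<and> Ystar \<omega> = y}"

lemma pr_T_given_Y_eq: "pr_T_given_Y Q t y x = pr_TY Q t y x / pr_Y Q y x"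
  by (simp add: pr_T_given_Y_def pr_TY_def)

lemma pr_T_total: "pr_T Q True x + pr_T Q False x = 1"
  unfolding pr_T_def by (rule measure_pmf_prob_bool_total)

lemma pr_Y_total: "pr_Y Q True x + pr_Y Q False x = 1"
  unfolding pr_Y_def by (rule measure_pmf_prob_bool_total)

lemma pr_T_given_Y_mult_pr_Y: "pr_T_given_Y Q t y x * pr_Y Q y x = pr_TY Q t y x"
  unfolding pr_T_given_Y_def pr_Y_def pr_TY_def by (rule measure_pmf_cond_prob_mult)

lemma pr_T_eq_mixture:
  "pr_T Q t x = pr_T_given_Y Q t False x + pr_Y Q True x * (pr_T_given_Y Q t True x - pr_T_given_Y Q t False x)"
proof -
  have "pr_T Q t x = pr_TY Q t True x + pr_TY Q t False x"
    unfolding pr_T_def pr_TY_def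
    using measure_pmf_prob_split[of "Q x" "{\<omega>. Tstar \<omega> = t}" Ystar] by simp
  also have "\<dots> = pr_T_given_Y Q t True x * pr_Y Q True x + pr_T_given_Y Q t False x * pr_Y Q False x"
    by (simp add: pr_T_given_Y_mult_pr_Y)
  also have "pr_Y Q False x = 1 - pr_Y Q True x"
    using pr_Y_total[of Q x] by simp
  finally show ?thesis by (simp add: algebra_simps)
qed

lemma pr_pot_given_T_same: "pr_pot_given_T Q t t x = pr_TY Q t True x / pr_T Q t x"
proof -
  have "{\<omega>. Ypot t \<omega> \<and> Tstar \<omega> = t} = {\<omega>. Tstar \<omega> = t \<and> Ystar \<omega> = True}"
    by (auto simp: Ystar_def)
  then show ?thesis unfolding pr_pot_given_T_def pr_TY_def pr_T_def by simp
qed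

lemma pr_pot_eq_pr_pot_given_T:
  assumes "pr_pot_given_T Q t True x = pr_pot_given_T Q t False x"
  shows "pr_pot Q t x = pr_pot_given_T Q t s x"
proof -
  have joint: "measure_pmf.prob (Q x) {\<omega>. Ypot t \<omega> \<and> Tstar \<omega> = s'} = pr_pot_given_T Q t s' x * pr_T Q s' x"
    for s'
    unfolding pr_pot_given_T_def pr_T_def by (rule measure_pmf_cond_prob_mult[symmetric])
  have "pr_pot Q t x = measure_pmf.prob (Q x) {\<omega>. Ypot t \<omega> \<and> Tstar \<omega> = True}
                       + measure_pmf.prob (Q x) {\<omega>. Ypot t \<omega> \<and> Tstar \<omega> = False}"
    unfolding pr_pot_def using measure_pmf_prob_split[of "Q x" "{\<omega>. Ypot t \<omega>}" Tstar] by simp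
  also have "\<dots> = pr_pot_given_T Q t s x * (pr_T Q True x + pr_T Q False x)"
    unfolding joint using assms by (cases s) (simp_all add: algebra_simps)
  finally show ?thesis by (simp add: pr_T_total)
qed

lemma theta_eq_risk_ratio:
  assumes "\<forall>t. pr_pot_given_T Q t True x = pr_pot_given_T Q t False x"
  shows "theta Q x = (pr_TY Q True True x / pr_T Q True x) / (pr_TY Q False True x / pr_T Q False x)"
proof -
  have "pr_pot Q t x = pr_TY Q t True x / pr_T Q t x" for t
    using pr_pot_eq_pr_pot_given_T[of Q t x t] assms by (simp add: pr_pot_given_T_same)
  then show ?thesis unfolding theta_def by simp
qed

lemma Gamma_eq_theta:
  assumes unconfounded: "\<forall>t. pr_pot_given_T Q t True x = pr_pot_given_T Q t False x"
    and PiT_cases: "\<forall>t. PiT t True x = pr_T_given_Y Q t True x"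
    and mixture: "\<forall>t. PiT t False x + rfun d h0 fXY x p * (PiT t True x - PiT t False x) = pr_T Q t x"
    and pr_Y_nonzero: "pr_Y Q True x \<noteq> 0"
  shows "Gamma d h0 fXY PiT x p = theta Q x"
proof -
  have "Gamma d h0 fXY PiT x p = PiT True True x / PiT False True x * (pr_T Q False x / pr_T Q True x)"
    using mixture unfolding Gamma_def Let_def by simp
  also have "PiT True True x / PiT False True x = pr_TY Q True True x / pr_TY Q False True x"
    using PiT_cases pr_Y_nonzero by (simp add: pr_T_given_Y_eq)
  finally show ?thesis
    using theta_eq_risk_ratio[OF unconfounded] by simp
qed

lemma rfun_Design1_eq_posterior:
  assumes "0 < h0" "h0 < 1" "0 < fXY True x" "0 < fXY False x"
  shows "rfun Design1 h0 fXY x p = p * fXY True x / (p * fXY True x + (1 - p) * fXY False x)"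
proof -
  define s where "s = h0 * fXY True x + (1 - h0) * fXY False x"
  define c where "c = h0 * (1 - h0) / s"
  have "s > 0"
    unfolding s_def using assms by (intro add_pos_pos mult_pos_pos) simp_all
  then have "c \<noteq> 0"
    using assms by (simp add: c_def)
  have "rfun Design1 h0 fXY x p
      = c * (p * fXY True x) / (c * (p * fXY True x) + c * ((1 - p) * fXY False x))"
    using \<open>s > 0\<close> unfolding rfun_def pr_Yobs_given_X_def Let_def s_def[symmetric] c_def
    by (simp add: field_simps)
  also have "\<dots> = p * fXY True x / (p * fXY True x + (1 - p) * fXY False x)"
    using \<open>c \<noteq> 0\<close> by (simp add: distrib_left[symmetric])
  finally show ?thesis .
qed

lemma rfun_case_control_eq_pr_Y:
  assumes "0 < h0" "h0 < 1" "0 < fXY True x" "0 < fXY False x"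
    and case_control: "\<forall>y. fXY y x = f_X_given_Ystar M fX Q y x"
  shows "rfun Design1 h0 fXY x (p0 M fX Q) = pr_Y Q True x"
proof -
  let ?p = "p0 M fX Q"
  have f1: "?p * fXY True x = fX x * pr_Y Q True x" and f0: "(1 - ?p) * fXY False x = fX x * pr_Y Q False x"
    using assms(3,4) case_control by (auto simp: f_X_given_Ystar_def)
  have "fX x \<noteq> 0"
    using assms(3) case_control by (auto simp: f_X_given_Ystar_def)
  have "rfun Design1 h0 fXY x ?p = fX x * pr_Y Q True x / (fX x * pr_Y Q True x + fX x * pr_Y Q False x)"
    using rfun_Design1_eq_posterior[of h0 fXY x] assms f1 f0 by simp
  also have "\<dots> = pr_Y Q True x / (pr_Y Q True x + pr_Y Q False x)"
    using \<open>fX x \<noteq> 0\<close> by (simp add: distrib_left[symmetric])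
  finally show ?thesis by (simp add: pr_Y_total)
qed

theorem theorem1:
  fixes d :: design
    and M :: "'x measure" and fX :: "'x \<Rightarrow> real" and Q :: "'x \<Rightarrow> pomega pmf"
    and h0 :: real and fXY :: "bool \<Rightarrow> 'x \<Rightarrow> real" and PiT :: "bool \<Rightarrow> bool \<Rightarrow> 'x \<Rightarrow> real"
    and S :: "'x set"
  assumes fX_density: "\<forall>x. fX x \<ge> 0" "integrable M fX" "integral\<^sup>L M fX = 1"
    and Q_meas: "\<forall>A. (\<lambda>x. measure_pmf.prob (Q x) A) \<in> borel_measurable M"
    and h0: "0 < h0" "h0 < 1"
    and fXY_density: "\<forall>y x. fXY y x \<ge> 0" "\<forall>y. integrable M (fXY y)" "\<forall>y. integral\<^sup>L M (fXY y) = 1"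
    and Pi_cond: "\<forall>x\<in>S. \<forall>t y. PiT t y x > 0" "\<forall>x\<in>S. \<forall>y. PiT True y x + PiT False y x = 1"
    and common_support: "S = {x. fX x > 0}" "\<forall>y. {x. fXY y x > 0} = S"
    and design: "design_holds d M fX Q fXY PiT S"
    and overlap: "\<forall>x\<in>S. \<forall>t. 0 < pr_pot Q t x \<and> pr_pot Q t x < 1"
                 "\<forall>x\<in>S. 0 < pr_T Q True x \<and> pr_T Q True x < 1"
    and unconfounded: "\<forall>x\<in>S. \<forall>t. pr_pot_given_T Q t True x = pr_pot_given_T Q t False x"
  shows "\<forall>x\<in>S. theta Q x =
           Gamma d h0 fXY PiT x (case d of Design1 \<Rightarrow> p0 M fX Q | Design2 \<Rightarrow> 0)"
proof
  fix x assume "x \<in> S"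
  let ?p = "case d of Design1 \<Rightarrow> p0 M fX Q | Design2 \<Rightarrow> 0"
  have fXY_pos: "0 < fXY y x" for y
    using common_support(2) \<open>x \<in> S\<close> by blast
  have PiT_cases: "\<forall>t. PiT t True x = pr_T_given_Y Q t True x"
    using design \<open>x \<in> S\<close> by (cases d) (simp_all add: design_holds_def)
  have "0 < PiT True True x"
    using Pi_cond(1) \<open>x \<in> S\<close> by blast
  then have pr_Y_nonzero: "pr_Y Q True x \<noteq> 0"
    using PiT_cases by (auto simp: pr_T_given_Y_eq)
  have mixture: "\<forall>t. PiT t False x + rfun d h0 fXY x ?p * (PiT t True x - PiT t False x) = pr_T Q t x"
  proof (cases d)
    case Design1
    then have "\<forall>y. fXY y x = f_X_given_Ystar M fX Q y x" "\<forall>t y. PiT t y x = pr_T_given_Y Q t y x"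
      using design \<open>x \<in> S\<close> by (simp_all add: design_holds_def)
    then show ?thesis
      using Design1 rfun_case_control_eq_pr_Y[of h0 fXY x] h0 fXY_pos by (simp add: pr_T_eq_mixture)
  next
    case Design2
    then show ?thesis
      using design \<open>x \<in> S\<close> by (simp add: design_holds_def rfun_def)
  qed
  show "theta Q x = Gamma d h0 fXY PiT x ?p"
    using Gamma_eq_theta[of Q x PiT d h0 fXY ?p] unconfounded \<open>x \<in> S\<close> PiT_cases mixture pr_Y_nonzero
    by simp
qed

end
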